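(* Let $F:\mathbb R^n\to\mathbb R^n$ be monotone with $\|F(z)-F(z')\|\le\ell\|z-z'\|$ and $\|\partial F(z)-\partial F(z')\|_\sigma\le\Lambda\|z-z'\|$. Let $\eta>0$, $z^{(-1)},z^{(0)}\in\mathbb R^n$, $z^{(t+1)}=z^{(t)}-2\eta F(z^{(t)})+\eta F(z^{(t-1)})$, $w^{(t)}:=z^{(t)}+\eta F(z^{(t-1)})$, $A^{(t)}:=\int_0^1\partial F(w^{(t)}-(1-\alpha)\eta F(z^{(t)}))d\alpha$, $B^{(t)}:=\int_0^1\partial F(w^{(t)}-(1-\alpha)\eta F(z^{(t-1)}))d\alpha$. Fix an integer $T\ge1$, set $C^{(T)}:=0$ and recursively $C^{(t-1)}:=(I-\eta A^{(t)}+C^{(t)})^{-1}\eta(\eta A^{(t)}-C^{(t)})B^{(t)}$ for $t=T,\dots,0$, and define $$D^{(t)}:=-\eta C^{(t)}B^{(t)}+(I-\eta A^{(t)}+C^{(t)})^{-1}(\eta A^{(t)}-C^{(t)})^2\eta B^{(t)}.$$ Suppose there is $L_0>0$ such that for all $0\le t\le T$, $\max\{\eta\|A^{(t)}\|_\sigma,\eta\|B^{(t)}\|_\sigma\}\le L_0\le\sqrt{1/200}$, and $\eta\ell\le 2/3$. Then for each $t\in\{1,\dots,T\}$, $$D^{(t)}+(D^{(t)})^\top\preceq 6L_0\eta^2(B^{(t)})^\top B^{(t)}+4L_0\eta^2A^{(t)}(A^{(t)})^\top+\Big(4L_0+\frac1{3L_0}\Big)C^{(t)}(C^{(t)})^\top$$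 and $$(D^{(t)})^\top D^{(t)}\preceq 60L_0^4\eta^2(B^{(t)})^\top B^{(t)}.$$
   Context: $F$ monotone means $\langle F(z')-F(z),z'-z\rangle\ge0$ for all $z,z'$. $\partial F$ is the Jacobian; $\|\cdot\|_\sigma$ the spectral norm; $S\preceq T$ means $T-S$ is positive semidefinite. (Under these hypotheses the inverses in the definitions exist.) *)

theory Defs
  imports "HOL-Analysis.Analysis"
begin

definition jac :: "(real^'n \<Rightarrow> real^'n) \<Rightarrow> real^'n \<Rightarrow> real^'n^'n" where
  "jac F z = matrix (frechet_derivative F (at z))"

(* spectral norm = operator norm w.r.t. the Euclidean norm *)
definition specnorm :: "real^'n^'m \<Rightarrow> real" where
  "specnorm M = onorm (\<lambda>x. M *v x)"

definition psd_le :: "real^'n^'n \<Rightarrow> real^'n^'n \<Rightarrow> bool" where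
  "psd_le S T \<longleftrightarrow> (\<forall>x. 0 \<le> x \<bullet> ((T - S) *v x))"

definition monotone_op :: "(real^'n \<Rightarrow> real^'n) \<Rightarrow> bool" where
  "monotone_op F \<longleftrightarrow> (\<forall>z z'. 0 \<le> (F z' - F z) \<bullet> (z' - z))"

definition wseq :: "(real^'n \<Rightarrow> real^'n) \<Rightarrow> real \<Rightarrow> (int \<Rightarrow> real^'n) \<Rightarrow> int \<Rightarrow> real^'n" where
  "wseq F \<eta> z t = z t + \<eta> *\<^sub>R F (z (t - 1))"

definition Amat :: "(real^'n \<Rightarrow> real^'n) \<Rightarrow> real \<Rightarrow> (int \<Rightarrow> real^'n) \<Rightarrow> int \<Rightarrow> real^'n^'n" where
  "Amat F \<eta> z t = integral {0..1}
     (\<lambda>\<alpha>::real. jac F (wseq F \<eta> z t - (1 - \<alpha>) *\<^sub>R (\<eta> *\<^sub>R F (z t))))"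

definition Bmat :: "(real^'n \<Rightarrow> real^'n) \<Rightarrow> real \<Rightarrow> (int \<Rightarrow> real^'n) \<Rightarrow> int \<Rightarrow> real^'n^'n" where
  "Bmat F \<eta> z t = integral {0..1}
     (\<lambda>\<alpha>::real. jac F (wseq F \<eta> z t - (1 - \<alpha>) *\<^sub>R (\<eta> *\<^sub>R F (z (t - 1)))))"

definition Dmat :: "real \<Rightarrow> real^'n^'n \<Rightarrow> real^'n^'n \<Rightarrow> real^'n^'n \<Rightarrow> real^'n^'n" where
  "Dmat \<eta> A B C =
     - (\<eta> *\<^sub>R (C ** B))
     + matrix_inv (mat 1 - \<eta> *\<^sub>R A + C) ** ((\<eta> *\<^sub>R A - C) ** (\<eta> *\<^sub>R A - C)) ** (\<eta> *\<^sub>R B)"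

end

theory Submission
  imports Defs
begin

(* Write X = eta A - C and K = (I - X)^-1 X. From eta |A|, eta |B| <= L0 <= 1/10 and
   |C| <= 2 L0^2 we get |X| <= 6/5 L0, hence |K| <= |X| / (1 - |X|) <= 3/2 L0 by the
   Neumann series bound. The recursion reads C(t-1) = K (eta B), so |C(t-1)| <= 3/2 L0^2,
   and the bound |C(t)| <= 2 L0^2 propagates backwards from C(T) = 0.
   Since (I - X)^-1 commutes with X, D = (X K - C) (eta B). Thus |D v| <= 4 L0^2 |eta B v|,
   which is the bound on D^T D, and
     v.D v = (eta A^T v).(K eta B v) - (C^T v).(K eta B v) - (C^T v).(eta B v)
   is bounded by Cauchy-Schwarz and AM-GM, which is the bound on D + D^T. *)

lemma norm_matrix_vector_le_specnorm: "norm (M *v v) \<le> specnorm M * norm v"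
  unfolding specnorm_def by (rule onorm[OF matrix_vector_mul_bounded_linear])

lemma norm_matrix_vector_le:
  assumes "specnorm M \<le> c"
  shows "norm (M *v v) \<le> c * norm v"
  using norm_matrix_vector_le_specnorm[of M v] mult_right_mono[OF assms norm_ge_zero[of v]] by linarith

lemma specnorm_nonneg: "0 \<le> specnorm M"
  unfolding specnorm_def by (rule onorm_pos_le[OF matrix_vector_mul_bounded_linear])

lemma specnorm_le:
  fixes M :: "real^'n^'m"
  assumes "\<And>v. norm (M *v v) \<le> c * norm v"
  shows "specnorm M \<le> c"
  unfolding specnorm_def by (rule onorm_le) (rule assms)

lemma specnorm_zero [simp]: "specnorm (0 :: real^'n^'m) = 0"
  by (rule antisym[OF specnorm_le specnorm_nonneg]) simp

lemma specnorm_scaleR: "specnorm (a *\<^sub>R M) = \<bar>a\<bar> * specnorm M"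
  unfolding specnorm_def scaleR_matrix_vector_assoc[symmetric]
  by (rule onorm_scaleR[OF matrix_vector_mul_bounded_linear])

lemma specnorm_diff_le: "specnorm (M - N) \<le> specnorm M + specnorm N"
proof (rule specnorm_le)
  fix v
  have "norm ((M - N) *v v) \<le> norm (M *v v) + norm (N *v v)"
    by (simp add: matrix_vector_mult_diff_rdistrib norm_triangle_ineq4)
  also have "\<dots> \<le> (specnorm M + specnorm N) * norm v"
    by (simp add: distrib_right add_mono norm_matrix_vector_le_specnorm)
  finally show "norm ((M - N) *v v) \<le> (specnorm M + specnorm N) * norm v" .
qed

lemma specnorm_mult_le: "specnorm (M ** N) \<le> specnorm M * specnorm N"
proof (rule specnorm_le)
  fix v
  have "norm ((M ** N) *v v) \<le> specnorm M * norm (N *v v)"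
    by (simp add: norm_matrix_vector_le_specnorm flip: matrix_vector_mul_assoc)
  also have "\<dots> \<le> specnorm M * (specnorm N * norm v)"
    by (simp add: mult_left_mono norm_matrix_vector_le_specnorm specnorm_nonneg)
  finally show "norm ((M ** N) *v v) \<le> specnorm M * specnorm N * norm v"
    by (simp add: mult.assoc)
qed

lemma matrix_inv_mult:
  assumes "invertible A"
  shows "A ** matrix_inv A = mat 1" and "matrix_inv A ** A = mat 1"
  using someI_ex[OF assms[unfolded invertible_def]] by (simp_all add: matrix_inv_def)

lemma invertible_one_minus:
  fixes X :: "real^'n^'n"
  assumes "specnorm X < 1"
  shows "invertible (mat 1 - X)"
proof -
  have "u = 0" if "(mat 1 - X) *v u = 0" for u
  proof -
    have "norm u = norm (X *v u)"
      using that by (simp add: matrix_vector_mult_diff_rdistrib)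
    also have "\<dots> \<le> specnorm X * norm u"
      by (rule norm_matrix_vector_le_specnorm)
    finally have "(1 - specnorm X) * norm u \<le> 0"
      by (simp add: algebra_simps)
    then show "u = 0"
      using assms by (simp add: mult_le_0_iff)
  qed
  then show ?thesis
    unfolding invertible_left_inverse matrix_left_invertible_ker by blast
qed

lemma specnorm_matrix_inv_one_minus_le:
  fixes X :: "real^'n^'n"
  assumes "specnorm X < 1"
  shows "specnorm (matrix_inv (mat 1 - X)) \<le> 1 / (1 - specnorm X)"
proof (rule specnorm_le)
  fix y
  define u where "u = matrix_inv (mat 1 - X) *v y"
  have "(mat 1 - X) *v u = y"
    unfolding u_def matrix_vector_mul_assoc matrix_inv_mult(1)[OF invertible_one_minus[OF assms]]
    by simp
  then have "u = y + X *v u"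
    by (simp add: matrix_vector_mult_diff_rdistrib algebra_simps)
  then have "norm u \<le> norm y + specnorm X * norm u"
    by (metis add_left_mono norm_triangle_ineq order_trans norm_matrix_vector_le_specnorm)
  then have "(1 - specnorm X) * norm u \<le> norm y"
    by (simp add: algebra_simps)
  then show "norm (matrix_inv (mat 1 - X) *v y) \<le> 1 / (1 - specnorm X) * norm y"
    using assms by (simp add: u_def field_simps)
qed

lemma matrix_inv_one_minus_commute:
  fixes X :: "real^'n^'n"
  assumes "invertible (mat 1 - X)"
  shows "matrix_inv (mat 1 - X) ** X = X ** matrix_inv (mat 1 - X)"
proof -
  let ?N = "matrix_inv (mat 1 - X)"
  have "?N ** (mat 1 - X) = (mat 1 - X) ** ?N"
    using matrix_inv_mult[OF assms] by simp
  then have "?N *v y - ?N *v (X *v y) = ?N *v y - X *v (?N *v y)" for y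
    unfolding matrix_eq
    by (simp add: matrix_vector_mult_diff_rdistrib matrix_vector_mult_diff_distrib
        flip: matrix_vector_mul_assoc)
  then show ?thesis
    unfolding matrix_eq by (simp add: matrix_vector_mul_assoc)
qed

lemma psd_le_iff: "psd_le S T \<longleftrightarrow> (\<forall>v. v \<bullet> (S *v v) \<le> v \<bullet> (T *v v))"
  by (simp add: psd_le_def matrix_vector_mult_diff_rdistrib inner_diff_right)

lemma inner_matrix_vector_transpose: "(x::real^'m) \<bullet> (M *v y) = (transpose M *v x) \<bullet> y"
  by (simp add: dot_lmul_matrix)

lemma abs_inner_matrix_vector_le: "\<bar>(x::real^'m) \<bullet> (M *v y)\<bar> \<le> norm (transpose M *v x) * norm y"
  unfolding inner_matrix_vector_transpose by (rule Cauchy_Schwarz_ineq2)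

lemma inner_transpose_mult_self:
  fixes M :: "real^'n^'m"
  shows "v \<bullet> ((transpose M ** M) *v v) = (norm (M *v v))\<^sup>2"
  using inner_matrix_vector_transpose[of v "transpose M" "M *v v"]
  by (simp only: transpose_transpose matrix_vector_mul_assoc power2_norm_eq_inner)

lemma inner_mult_transpose_self:
  fixes M :: "real^'n^'m"
  shows "v \<bullet> ((M ** transpose M) *v v) = (norm (transpose M *v v))\<^sup>2"
  using inner_transpose_mult_self[of v "transpose M"] by simp

lemma cross_terms_le_squares:
  fixes a b c L :: real
  assumes "0 < L"
  shows "2 * (c * b + 3/2 * L * (a + c) * b)
    \<le> 6 * L * b\<^sup>2 + 4 * L * a\<^sup>2 + (4 * L + 1 / (3 * L)) * c\<^sup>2"
proof -
  have "0 \<le> (3 * L * b - c)\<^sup>2 / (3 * L)"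
    using assms by simp
  then have cb: "2 * c * b \<le> 3 * L * b\<^sup>2 + c\<^sup>2 / (3 * L)"
    using assms by (simp add: power2_diff field_simps power2_eq_square)
  have "0 \<le> L * (a - b)\<^sup>2" "0 \<le> L * (c - b)\<^sup>2"
    using assms by simp_all
  then have "3 * L * a * b \<le> 3/2 * L * a\<^sup>2 + 3/2 * L * b\<^sup>2"
    and "3 * L * c * b \<le> 3/2 * L * c\<^sup>2 + 3/2 * L * b\<^sup>2"
    by (simp_all add: power2_diff algebra_simps)
  moreover have "0 \<le> L * a\<^sup>2" "0 \<le> L * c\<^sup>2"
    using assms by simp_all
  moreover have "2 * (c * b + 3/2 * L * (a + c) * b) = 2 * c * b + 3 * L * a * b + 3 * L * c * b"
    and "(4 * L + 1 / (3 * L)) * c\<^sup>2 = 4 * L * c\<^sup>2 + c\<^sup>2 / (3 * L)"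
    by (simp_all add: algebra_simps)
  ultimately show ?thesis
    using cb by linarith
qed

lemma specnorm_resolvent_le:
  fixes X :: "real^'n^'n"
  assumes "specnorm X \<le> x" "x < 1"
  shows "specnorm (matrix_inv (mat 1 - X) ** X) \<le> x / (1 - x)"
proof -
  have "specnorm (matrix_inv (mat 1 - X) ** X) \<le> 1 / (1 - specnorm X) * specnorm X"
    using assms specnorm_matrix_inv_one_minus_le[of X] specnorm_nonneg[of X]
    by (intro order_trans[OF specnorm_mult_le] mult_right_mono) auto
  also have "\<dots> \<le> 1 / (1 - x) * x"
    using assms specnorm_nonneg[of X]
    by (intro mult_mono divide_left_mono mult_pos_pos) auto
  finally show ?thesis
    by simp
qed

lemma Dmat_one_apply:
  fixes P Q C :: "real^'n^'n"
  assumes "invertible (mat 1 - (P - C))"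
  shows "Dmat 1 P Q C *v v
    = (P - C) *v ((matrix_inv (mat 1 - (P - C)) ** (P - C)) *v (Q *v v)) - C *v (Q *v v)"
proof -
  define X where "X = P - C"
  let ?N = "matrix_inv (mat 1 - X)"
  have resolvent_arg: "mat 1 - P + C = mat 1 - X"
    unfolding X_def by (simp add: algebra_simps)
  have "Dmat 1 P Q C *v v = ?N *v (X *v (X *v (Q *v v))) - C *v (Q *v v)"
    unfolding Dmat_def scaleR_one resolvent_arg X_def[symmetric]
    by (simp add: matrix_vector_mult_add_rdistrib matrix_vector_mult_diff_rdistrib
        flip: matrix_vector_mul_assoc)
  also have "?N *v (X *v w) = X *v (?N *v w)" for w
    using matrix_inv_one_minus_commute[OF assms[folded X_def]]
    by (simp add: matrix_vector_mul_assoc)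
  finally show ?thesis
    by (simp add: X_def flip: matrix_vector_mul_assoc)
qed

lemma psd_le_gram_if_norm_le:
  fixes D Q :: "real^'n^'n"
  assumes "\<And>v. norm (D *v v) \<le> c * norm (Q *v v)" and "c\<^sup>2 \<le> d"
  shows "psd_le (transpose D ** D) (d *\<^sub>R (transpose Q ** Q))"
  unfolding psd_le_iff
proof
  fix v
  have "v \<bullet> ((transpose D ** D) *v v) = (norm (D *v v))\<^sup>2"
    by (rule inner_transpose_mult_self)
  also have "\<dots> \<le> (c * norm (Q *v v))\<^sup>2"
    using assms(1) by (rule power_mono) simp
  also have "\<dots> \<le> d * (norm (Q *v v))\<^sup>2"
    using assms(2) by (simp add: power_mult_distrib mult_right_mono)
  also have "\<dots> = v \<bullet> ((d *\<^sub>R (transpose Q ** Q)) *v v)"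
    by (simp add: inner_transpose_mult_self flip: scaleR_matrix_vector_assoc)
  finally show "v \<bullet> ((transpose D ** D) *v v) \<le> v \<bullet> ((d *\<^sub>R (transpose Q ** Q)) *v v)" .
qed

lemma transpose_scaleR_mult_scaleR:
  fixes M :: "real^'n^'m"
  shows "transpose (a *\<^sub>R M) ** (a *\<^sub>R M) = a\<^sup>2 *\<^sub>R (transpose M ** M)"
    and "(a *\<^sub>R M) ** transpose (a *\<^sub>R M) = a\<^sup>2 *\<^sub>R (M ** transpose M)"
  by (simp_all only: transpose_scalar matrix_scalar_ac scalar_matrix_assoc[symmetric]
      scaleR_scaleR power2_eq_square)

lemma Dmat_eq_Dmat_one: "Dmat \<eta> A B C = Dmat 1 (\<eta> *\<^sub>R A) (\<eta> *\<^sub>R B) C"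
  by (simp add: Dmat_def scalar_matrix_assoc matrix_scalar_ac)

context
  fixes P Q C :: "real^'n^'n" and L :: real
  assumes L_pos: "0 < L" and L_le: "L \<le> 1/10"
    and P_le: "specnorm P \<le> L" and Q_le: "specnorm Q \<le> L" and C_le: "specnorm C \<le> 2 * L\<^sup>2"
begin

lemma specnorm_diff_small: "specnorm (P - C) \<le> 6/5 * L"
proof -
  have "2 * L\<^sup>2 \<le> L / 5"
    using L_pos L_le by (simp add: power2_eq_square)
  then show ?thesis
    using specnorm_diff_le[of P C] P_le C_le by linarith
qed

lemma invertible_resolvent: "invertible (mat 1 - (P - C))"
  using specnorm_diff_small L_le by (intro invertible_one_minus) linarith

lemma specnorm_resolvent_small:
  "specnorm (matrix_inv (mat 1 - (P - C)) ** (P - C)) \<le> 3/2 * L"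
proof -
  have "6/5 * L / (1 - 6/5 * L) \<le> 3/2 * L"
    using L_pos L_le by (simp add: field_simps)
  then show ?thesis
    using specnorm_resolvent_le[OF specnorm_diff_small] L_le by linarith
qed

lemma specnorm_next_C_le: "specnorm (matrix_inv (mat 1 - P + C) ** ((P - C) ** Q)) \<le> 2 * L\<^sup>2"
proof -
  have "mat 1 - P + C = mat 1 - (P - C)"
    by (simp add: algebra_simps)
  then have "specnorm (matrix_inv (mat 1 - P + C) ** ((P - C) ** Q))
      \<le> specnorm (matrix_inv (mat 1 - (P - C)) ** (P - C)) * specnorm Q"
    unfolding matrix_mul_assoc by (simp only: specnorm_mult_le)
  also have "\<dots> \<le> 3/2 * L * L"
    using specnorm_resolvent_small Q_le L_pos specnorm_nonneg[of Q] by (intro mult_mono) auto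
  also have "\<dots> \<le> 2 * L\<^sup>2"
    using L_pos by (simp add: power2_eq_square)
  finally show ?thesis .
qed

lemma norm_Dmat_one_le: "norm (Dmat 1 P Q C *v v) \<le> 4 * L\<^sup>2 * norm (Q *v v)"
proof -
  let ?K = "matrix_inv (mat 1 - (P - C)) ** (P - C)"
  let ?b = "Q *v v"
  have "norm (Dmat 1 P Q C *v v) \<le> norm ((P - C) *v (?K *v ?b)) + norm (C *v ?b)"
    unfolding Dmat_one_apply[OF invertible_resolvent] by (rule norm_triangle_ineq4)
  also have "\<dots> \<le> 6/5 * L * (3/2 * L * norm ?b) + 2 * L\<^sup>2 * norm ?b"
  proof (rule add_mono)
    have "norm ((P - C) *v (?K *v ?b)) \<le> 6/5 * L * norm (?K *v ?b)"
      by (rule norm_matrix_vector_le[OF specnorm_diff_small])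
    also have "\<dots> \<le> 6/5 * L * (3/2 * L * norm ?b)"
      using L_pos by (intro mult_left_mono norm_matrix_vector_le[OF specnorm_resolvent_small]) simp
    finally show "norm ((P - C) *v (?K *v ?b)) \<le> 6/5 * L * (3/2 * L * norm ?b)" .
    show "norm (C *v ?b) \<le> 2 * L\<^sup>2 * norm ?b"
      by (rule norm_matrix_vector_le[OF C_le])
  qed
  also have "\<dots> = 19/5 * (L\<^sup>2 * norm ?b)"
    by (simp add: power2_eq_square algebra_simps)
  also have "\<dots> \<le> 4 * L\<^sup>2 * norm ?b"
    by simp
  finally show ?thesis .
qed

lemma Dmat_one_gram_le:
  "psd_le (transpose (Dmat 1 P Q C) ** Dmat 1 P Q C) ((60 * L ^ 4) *\<^sub>R (transpose Q ** Q))"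
  by (rule psd_le_gram_if_norm_le[OF norm_Dmat_one_le]) (simp add: power_mult_distrib)

lemma Dmat_one_symmetric_part_le:
  "psd_le (Dmat 1 P Q C + transpose (Dmat 1 P Q C))
     ((6 * L) *\<^sub>R (transpose Q ** Q) + (4 * L) *\<^sub>R (P ** transpose P)
      + (4 * L + 1 / (3 * L)) *\<^sub>R (C ** transpose C))"
  unfolding psd_le_iff
proof
  fix v
  let ?D = "Dmat 1 P Q C"
  let ?b = "Q *v v"
  let ?w = "(matrix_inv (mat 1 - (P - C)) ** (P - C)) *v ?b"
  define a b c where "a = norm (transpose P *v v)" and "b = norm ?b" and "c = norm (transpose C *v v)"
  have w: "norm ?w \<le> 3/2 * L * b"
    unfolding b_def by (rule norm_matrix_vector_le[OF specnorm_resolvent_small])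
  have "v \<bullet> (?D *v v) = v \<bullet> (P *v ?w) - v \<bullet> (C *v ?w) - v \<bullet> (C *v ?b)"
    by (simp add: Dmat_one_apply[OF invertible_resolvent] matrix_vector_mult_diff_rdistrib
        inner_diff_right)
  also have "\<dots> \<le> a * norm ?w + c * norm ?w + c * b"
    using abs_inner_matrix_vector_le[of v P ?w] abs_inner_matrix_vector_le[of v C ?w]
      abs_inner_matrix_vector_le[of v C ?b]
    unfolding a_def b_def c_def by linarith
  also have "\<dots> \<le> c * b + 3/2 * L * (a + c) * b"
    using mult_left_mono[OF w, of a] mult_left_mono[OF w, of c]
    unfolding a_def c_def by (simp add: algebra_simps)
  finally have D: "v \<bullet> (?D *v v) \<le> c * b + 3/2 * L * (a + c) * b" .
  have "v \<bullet> ((?D + transpose ?D) *v v) = 2 * (v \<bullet> (?D *v v))"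
    using inner_matrix_vector_transpose[of v "transpose ?D" v]
    by (simp add: matrix_vector_mult_add_rdistrib inner_add_right inner_commute)
  also have "\<dots> \<le> 6 * L * b\<^sup>2 + 4 * L * a\<^sup>2 + (4 * L + 1 / (3 * L)) * c\<^sup>2"
    by (rule order_trans[OF mult_left_mono[OF D] cross_terms_le_squares[OF L_pos]]) simp
  also have "\<dots> = v \<bullet> (((6 * L) *\<^sub>R (transpose Q ** Q) + (4 * L) *\<^sub>R (P ** transpose P)
      + (4 * L + 1 / (3 * L)) *\<^sub>R (C ** transpose C)) *v v)"
    by (simp add: a_def b_def c_def matrix_vector_mult_add_rdistrib inner_add_right
        inner_transpose_mult_self inner_mult_transpose_self flip: scaleR_matrix_vector_assoc)
  finally show "v \<bullet> ((?D + transpose ?D) *v v) \<le> v \<bullet> (((6 * L) *\<^sub>R (transpose Q ** Q)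
      + (4 * L) *\<^sub>R (P ** transpose P) + (4 * L + 1 / (3 * L)) *\<^sub>R (C ** transpose C)) *v v)" .
qed

end

lemma specnorm_next_C_scaled_le:
  fixes A B C :: "real^'n^'n"
  assumes "0 < L" "L \<le> 1/10" "0 < \<eta>"
    and "\<eta> * specnorm A \<le> L" "\<eta> * specnorm B \<le> L" "specnorm C \<le> 2 * L\<^sup>2"
  shows "specnorm (matrix_inv (mat 1 - \<eta> *\<^sub>R A + C) ** (\<eta> *\<^sub>R ((\<eta> *\<^sub>R A - C) ** B)))
    \<le> 2 * L\<^sup>2"
  using specnorm_next_C_le[of L "\<eta> *\<^sub>R A" "\<eta> *\<^sub>R B" C] assms
  by (simp add: specnorm_scaleR scalar_matrix_assoc matrix_scalar_ac)

lemma Dmat_psd_bounds: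
  fixes A B C :: "real^'n^'n"
  assumes "0 < L" "L \<le> 1/10" "0 < \<eta>"
    and "\<eta> * specnorm A \<le> L" "\<eta> * specnorm B \<le> L" "specnorm C \<le> 2 * L\<^sup>2"
  shows "psd_le (Dmat \<eta> A B C + transpose (Dmat \<eta> A B C))
      ((6 * L * \<eta>\<^sup>2) *\<^sub>R (transpose B ** B) + (4 * L * \<eta>\<^sup>2) *\<^sub>R (A ** transpose A)
       + (4 * L + 1 / (3 * L)) *\<^sub>R (C ** transpose C))"
    and "psd_le (transpose (Dmat \<eta> A B C) ** Dmat \<eta> A B C)
      ((60 * L ^ 4 * \<eta>\<^sup>2) *\<^sub>R (transpose B ** B))"
  using Dmat_one_symmetric_part_le[of L "\<eta> *\<^sub>R A" "\<eta> *\<^sub>R B" C]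
    Dmat_one_gram_le[of L "\<eta> *\<^sub>R A" "\<eta> *\<^sub>R B" C] assms
  by (simp_all add: Dmat_eq_Dmat_one[of \<eta>] specnorm_scaleR transpose_scaleR_mult_scaleR)

theorem lemma16:
  fixes F :: "real^'n \<Rightarrow> real^'n"
    and ell Lam \<eta> L0 :: real
    and z :: "int \<Rightarrow> real^'n"
    and C :: "int \<Rightarrow> real^'n^'n"
    and T :: int
  assumes mono: "monotone_op F"
    and diff: "\<And>x. F differentiable (at x)"
    and lipF: "\<And>x y. norm (F x - F y) \<le> ell * norm (x - y)"
    and lipJ: "\<And>x y. specnorm (jac F x - jac F y) \<le> Lam * norm (x - y)"
    and eta_pos: "\<eta> > 0"
    and iter: "\<And>t. t \<ge> 0 \<Longrightarrow>
        z (t + 1) = z t - (2 * \<eta>) *\<^sub>R F (z t) + \<eta> *\<^sub>R F (z (t - 1))"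
    and T1: "T \<ge> 1"
    and CT: "C T = 0"
    and Crec: "\<And>t. 0 \<le> t \<Longrightarrow> t \<le> T \<Longrightarrow>
        C (t - 1) = matrix_inv (mat 1 - \<eta> *\<^sub>R Amat F \<eta> z t + C t)
                    ** (\<eta> *\<^sub>R ((\<eta> *\<^sub>R Amat F \<eta> z t - C t) ** Bmat F \<eta> z t))"
    and L0_pos: "L0 > 0"
    and bndA: "\<And>t. 0 \<le> t \<Longrightarrow> t \<le> T \<Longrightarrow> \<eta> * specnorm (Amat F \<eta> z t) \<le> L0"
    and bndB: "\<And>t. 0 \<le> t \<Longrightarrow> t \<le> T \<Longrightarrow> \<eta> * specnorm (Bmat F \<eta> z t) \<le> L0"
    and L0_small: "L0 \<le> sqrt (1 / 200)"
    and eta_ell: "\<eta> * ell \<le> 2 / 3"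
  shows "\<forall>t. 1 \<le> t \<and> t \<le> T \<longrightarrow>
      (let A = Amat F \<eta> z t; B = Bmat F \<eta> z t; D = Dmat \<eta> A B (C t) in
        psd_le (D + transpose D)
          ((6 * L0 * \<eta>\<^sup>2) *\<^sub>R (transpose B ** B)
           + (4 * L0 * \<eta>\<^sup>2) *\<^sub>R (A ** transpose A)
           + (4 * L0 + 1 / (3 * L0)) *\<^sub>R (C t ** transpose (C t)))
        \<and> psd_le (transpose D ** D) ((60 * L0 ^ 4 * \<eta>\<^sup>2) *\<^sub>R (transpose B ** B)))"
proof -
  have "sqrt (1/200) \<le> sqrt ((1/10)\<^sup>2)"
    by (simp add: power2_eq_square)
  then have L0_le: "L0 \<le> 1/10"
    using L0_small by simp
  have C_le: "0 \<le> t \<longrightarrow> specnorm (C t) \<le> 2 * L0\<^sup>2" if "t \<le> T" for t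
    using that
  proof (induction t rule: int_le_induct)
    case base
    show ?case
      using CT by simp
  next
    case (step t)
    show ?case
      using step specnorm_next_C_scaled_le[OF L0_pos L0_le eta_pos bndA bndB] Crec by simp
  qed
  show ?thesis
    unfolding Let_def
    using Dmat_psd_bounds[OF L0_pos L0_le eta_pos bndA bndB] C_le by simp
qed

end
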